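(* Let $B$ be a Horn program, $E^+,E^-$ finite sets of ground atoms, and $H_1,H_2,H_3\in\mathcal{H}_{D,C}$ hypotheses with $H_3$ a specialization of $H_1$. If $S_{MDL}(H_2,B,E^+,E^-) - S_{MDL}(H_1,B,E^+,E^-) > fp(H_1,B,E^-) - (size(H_3)-size(H_1))$, then $S_{MDL}(H_2,B,E^+,E^-) > S_{MDL}(H_3,B,E^+,E^-)$.
   Context: A definite clause is a clause with exactly one positive literal. A hypothesis is a finite set of definite clauses; $\mathcal{H}_{D,C}$ denotes the hypothesis space of hypotheses consistent with a declaration bias $D$ and hypothesis constraints $C$ (only membership matters). $size(H)$ is the total number of literals in $H$. $B$ is background knowledge, $E^+$ positive and $E^-$ negative examples. For a hypothesis $H$: $tp(H,B,E^+)=|\{e\in E^+ : H\cup B\models e\}|$, $tn(H,B,E^-)=|\{e\in E^- : H\cup B\not\models e\}|$, $fp(H,B,E^-)=|E^-|-tn(H,B,E^-)$, and $S_{MDL}(H,B,E^+,E^-)=tp(H,B,E^+)+tn(H,B,E^-)-size(H)$. A clause $C_1$ subsumes a clause $C_2$ iff there is a substitution $\theta$ with $C_1\theta\subseteq C_2$. A clausal theory $T_1$ subsumes $T_2$ ($T_1\preceq T_2$) iff every clause of $T_2$ is subsumed by some clause of $T_1$. $T_1$ is a generalization of $T_2$ iff $T_1\preceq T_2$, and a specialization of $T_2$ iff $T_2\preceq T_1$. *)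

theory Defs
  imports Main
begin

datatype ('f, 'v) trm = Var 'v | Fun 'f "('f, 'v) trm list"

type_synonym ('p, 'f, 'v) atom = "'p \<times> ('f, 'v) trm list"

datatype ('p, 'f, 'v) lit = Pos "('p, 'f, 'v) atom" | Neg "('p, 'f, 'v) atom"

type_synonym ('p, 'f, 'v) clause = "('p, 'f, 'v) lit set"

fun vars_trm :: "('f, 'v) trm \<Rightarrow> 'v set" where
  "vars_trm (Var x) = {x}"
| "vars_trm (Fun f ts) = (\<Union>t\<in>set ts. vars_trm t)"

definition ground_trm :: "('f, 'v) trm \<Rightarrow> bool" where
  "ground_trm t \<longleftrightarrow> vars_trm t = {}"

definition ground_atom :: "('p, 'f, 'v) atom \<Rightarrow> bool" where
  "ground_atom a \<longleftrightarrow> (\<forall>t\<in>set (snd a). ground_trm t)"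

fun subst_trm :: "('v \<Rightarrow> ('f, 'v) trm) \<Rightarrow> ('f, 'v) trm \<Rightarrow> ('f, 'v) trm" where
  "subst_trm \<sigma> (Var x) = \<sigma> x"
| "subst_trm \<sigma> (Fun f ts) = Fun f (map (subst_trm \<sigma>) ts)"

definition subst_atom :: "('v \<Rightarrow> ('f, 'v) trm) \<Rightarrow> ('p, 'f, 'v) atom \<Rightarrow> ('p, 'f, 'v) atom" where
  "subst_atom \<sigma> a = (fst a, map (subst_trm \<sigma>) (snd a))"

fun subst_lit :: "('v \<Rightarrow> ('f, 'v) trm) \<Rightarrow> ('p, 'f, 'v) lit \<Rightarrow> ('p, 'f, 'v) lit" where
  "subst_lit \<sigma> (Pos a) = Pos (subst_atom \<sigma> a)"
| "subst_lit \<sigma> (Neg a) = Neg (subst_atom \<sigma> a)"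

definition subst_clause :: "('v \<Rightarrow> ('f, 'v) trm) \<Rightarrow> ('p, 'f, 'v) clause \<Rightarrow> ('p, 'f, 'v) clause" where
  "subst_clause \<sigma> C = subst_lit \<sigma> ` C"

fun is_pos :: "('p, 'f, 'v) lit \<Rightarrow> bool" where
  "is_pos (Pos _) = True"
| "is_pos (Neg _) = False"

definition definite_clause :: "('p, 'f, 'v) clause \<Rightarrow> bool" where
  "definite_clause C \<longleftrightarrow> finite C \<and> card {L\<in>C. is_pos L} = 1"

definition horn_clause :: "('p, 'f, 'v) clause \<Rightarrow> bool" where
  "horn_clause C \<longleftrightarrow> finite C \<and> card {L\<in>C. is_pos L} \<le> 1"

definition hypothesis :: "('p, 'f, 'v) clause set \<Rightarrow> bool" where
  "hypothesis H \<longleftrightarrow> finite H \<and> (\<forall>C\<in>H. definite_clause C)"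

definition horn_program :: "('p, 'f, 'v) clause set \<Rightarrow> bool" where
  "horn_program B \<longleftrightarrow> finite B \<and> (\<forall>C\<in>B. horn_clause C)"

definition size_hyp :: "('p, 'f, 'v) clause set \<Rightarrow> nat" where
  "size_hyp H = (\<Sum>C\<in>H. card C)"

definition subsumes :: "('p, 'f, 'v) clause \<Rightarrow> ('p, 'f, 'v) clause \<Rightarrow> bool" where
  "subsumes C1 C2 \<longleftrightarrow> (\<exists>\<theta>. subst_clause \<theta> C1 \<subseteq> C2)"

definition theory_subsumes :: "('p, 'f, 'v) clause set \<Rightarrow> ('p, 'f, 'v) clause set \<Rightarrow> bool" where
  "theory_subsumes T1 T2 \<longleftrightarrow> (\<forall>C2\<in>T2. \<exists>C1\<in>T1. subsumes C1 C2)"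

definition specialization :: "('p, 'f, 'v) clause set \<Rightarrow> ('p, 'f, 'v) clause set \<Rightarrow> bool" where
  "specialization T1 T2 \<longleftrightarrow> theory_subsumes T2 T1"

definition ground_subst :: "('v \<Rightarrow> ('f, 'v) trm) \<Rightarrow> bool" where
  "ground_subst \<sigma> \<longleftrightarrow> (\<forall>x. ground_trm (\<sigma> x))"

fun lit_true :: "('p, 'f, 'v) atom set \<Rightarrow> ('p, 'f, 'v) lit \<Rightarrow> bool" where
  "lit_true I (Pos a) \<longleftrightarrow> a \<in> I"
| "lit_true I (Neg a) \<longleftrightarrow> a \<notin> I"

definition clause_true :: "('p, 'f, 'v) atom set \<Rightarrow> ('p, 'f, 'v) clause \<Rightarrow> bool" where
  "clause_true I C \<longleftrightarrow> (\<forall>\<sigma>. ground_subst \<sigma> \<longrightarrow> (\<exists>L\<in>C. lit_true I (subst_lit \<sigma> L)))"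

definition entails :: "('p, 'f, 'v) clause set \<Rightarrow> ('p, 'f, 'v) atom \<Rightarrow> bool" where
  "entails T e \<longleftrightarrow>
     (\<forall>I. (\<forall>a\<in>I. ground_atom a) \<longrightarrow> (\<forall>C\<in>T. clause_true I C) \<longrightarrow> e \<in> I)"

definition tp :: "('p, 'f, 'v) clause set \<Rightarrow> ('p, 'f, 'v) clause set \<Rightarrow> ('p, 'f, 'v) atom set \<Rightarrow> nat" where
  "tp H B Ep = card {e\<in>Ep. entails (H \<union> B) e}"

definition tn :: "('p, 'f, 'v) clause set \<Rightarrow> ('p, 'f, 'v) clause set \<Rightarrow> ('p, 'f, 'v) atom set \<Rightarrow> nat" where
  "tn H B En = card {e\<in>En. \<not> entails (H \<union> B) e}"

definition fp :: "('p, 'f, 'v) clause set \<Rightarrow> ('p, 'f, 'v) clause set \<Rightarrow> ('p, 'f, 'v) atom set \<Rightarrow> int" where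
  "fp H B En = int (card En) - int (tn H B En)"

definition S_MDL :: "('p, 'f, 'v) clause set \<Rightarrow> ('p, 'f, 'v) clause set \<Rightarrow> ('p, 'f, 'v) atom set
    \<Rightarrow> ('p, 'f, 'v) atom set \<Rightarrow> int" where
  "S_MDL H B Ep En = int (tp H B Ep) + int (tn H B En) - int (size_hyp H)"

end

theory Submission
  imports Defs
begin

text \<open>If \<open>H\<^sub>1\<close> subsumes \<open>H\<^sub>3\<close>, every model of \<open>H\<^sub>1\<close> is a model of \<open>H\<^sub>3\<close>, so \<open>H\<^sub>1 \<union> B\<close> entails
  every atom that \<open>H\<^sub>3 \<union> B\<close> entails. Hence \<open>H\<^sub>3\<close> has at most the true positives of \<open>H\<^sub>1\<close> and at
  most \<open>|E\<^sup>-| = tn(H\<^sub>1) + fp(H\<^sub>1)\<close> true negatives, i.e.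
  \<open>S(H\<^sub>3) \<le> S(H\<^sub>1) + fp(H\<^sub>1) - (size(H\<^sub>3) - size(H\<^sub>1))\<close>, and the hypothesis on \<open>H\<^sub>2\<close> finishes the
  argument.\<close>

lemma subst_trm_subst_trm: "subst_trm \<sigma> (subst_trm \<theta> t) = subst_trm (subst_trm \<sigma> \<circ> \<theta>) t"
  by (induction t) auto

lemma subst_lit_subst_lit: "subst_lit \<sigma> (subst_lit \<theta> L) = subst_lit (subst_trm \<sigma> \<circ> \<theta>) L"
  by (cases L) (auto simp: subst_atom_def subst_trm_subst_trm)

lemma ground_trm_subst_trm: "ground_subst \<sigma> \<Longrightarrow> ground_trm (subst_trm \<sigma> t)"
  by (induction t) (auto simp: ground_subst_def ground_trm_def)

lemma ground_subst_comp: "ground_subst \<sigma> \<Longrightarrow> ground_subst (subst_trm \<sigma> \<circ> \<theta>)"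
  by (simp add: ground_subst_def ground_trm_subst_trm)

lemma clause_true_subsumes:
  fixes C\<^sub>1 C\<^sub>2 :: "('p, 'f, 'v) clause"
  assumes "subsumes C\<^sub>1 C\<^sub>2" and "clause_true I C\<^sub>1"
  shows "clause_true I C\<^sub>2"
  unfolding clause_true_def
proof (intro allI impI)
  fix \<sigma> :: "'v \<Rightarrow> ('f, 'v) trm"
  assume "ground_subst \<sigma>"
  obtain \<theta> where \<theta>: "subst_clause \<theta> C\<^sub>1 \<subseteq> C\<^sub>2"
    using assms(1) by (auto simp: subsumes_def)
  obtain L where "L \<in> C\<^sub>1" and "lit_true I (subst_lit (subst_trm \<sigma> \<circ> \<theta>) L)"
    using assms(2) ground_subst_comp[OF \<open>ground_subst \<sigma>\<close>] by (auto simp: clause_true_def)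
  moreover have "subst_lit \<theta> L \<in> C\<^sub>2"
    using \<theta> \<open>L \<in> C\<^sub>1\<close> by (auto simp: subst_clause_def)
  ultimately show "\<exists>L\<in>C\<^sub>2. lit_true I (subst_lit \<sigma> L)"
    by (metis subst_lit_subst_lit)
qed

lemma entails_theory_subsumes:
  assumes "theory_subsumes T\<^sub>1 T\<^sub>2" and "entails (T\<^sub>2 \<union> B) e"
  shows "entails (T\<^sub>1 \<union> B) e"
  unfolding entails_def
proof (intro allI impI)
  fix I
  assume "\<forall>a\<in>I. ground_atom a" and model: "\<forall>C\<in>T\<^sub>1 \<union> B. clause_true I C"
  then have "\<forall>C\<in>T\<^sub>2 \<union> B. clause_true I C"
    using assms(1) clause_true_subsumes by (fastforce simp: theory_subsumes_def)
  then show "e \<in> I"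
    using assms(2) \<open>\<forall>a\<in>I. ground_atom a\<close> by (auto simp: entails_def)
qed

lemma tp_specialization_le:
  assumes "specialization H' H" and "finite Ep"
  shows "tp H' B Ep \<le> tp H B Ep"
proof -
  have "{e\<in>Ep. entails (H' \<union> B) e} \<subseteq> {e\<in>Ep. entails (H \<union> B) e}"
    using assms(1) entails_theory_subsumes by (auto simp: specialization_def)
  then show ?thesis
    using assms(2) by (simp add: tp_def card_mono)
qed

lemma tn_le_card: "finite En \<Longrightarrow> tn H B En \<le> card En"
  by (simp add: tn_def card_mono)

lemma S_MDL_specialization_le:
  assumes "specialization H' H" and "finite Ep" and "finite En"
  shows "S_MDL H' B Ep En
           \<le> S_MDL H B Ep En + fp H B En - (int (size_hyp H') - int (size_hyp H))"
  using tp_specialization_le[OF assms(1,2), of B] tn_le_card[OF assms(3), of H' B]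
  by (simp add: S_MDL_def fp_def)

theorem proposition4p11:
  fixes B H1 H2 H3 :: "('p, 'f, 'v) clause set"
    and Ep En :: "('p, 'f, 'v) atom set"
    and HDC :: "('p, 'f, 'v) clause set set"
  assumes "horn_program B"
    and "finite Ep" and "\<forall>e\<in>Ep. ground_atom e"
    and "finite En" and "\<forall>e\<in>En. ground_atom e"
    and "\<forall>H\<in>HDC. hypothesis H"
    and "H1 \<in> HDC" and "H2 \<in> HDC" and "H3 \<in> HDC"
    and "specialization H3 H1"
    and "S_MDL H2 B Ep En - S_MDL H1 B Ep En
           > fp H1 B En - (int (size_hyp H3) - int (size_hyp H1))"
  shows "S_MDL H2 B Ep En > S_MDL H3 B Ep En"
  using S_MDL_specialization_le[OF assms(10,2,4), of B] assms(11) by linarith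

end
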